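(* Let $G$ be a connected graph with $\delta(G)=1$, girth at least $15$, and $G\in\mathcal U$. If $s_1$ is a single star support vertex of $G$, then there is no double star support vertex $s$ of $G$ with $d_G(s_1,s)=3$.
   Context: All graphs are finite and simple. A set $P\subseteq V(G)$ is an open packing if no two distinct vertices of $P$ have a common neighbor; it is maximal if maximal under inclusion among open packings. $\rho^o(G)$ is the maximum size of an open packing and $\rho^o_L(G)$ the minimum size of a maximal open packing; $\mathcal U$ is the class of graphs with $\rho^o_L(G)=\rho^o(G)$. A leaf is a vertex of degree $1$; a support vertex is a vertex adjacent to at least one leaf; $S_G$ is the set of support vertices. A single star support vertex is a support vertex not adjacent to any other support vertex; a double star support vertex is a support vertex adjacent to another support vertex. *)

theory Defs
  imports Main
begin

definition simple_graph :: "'a set \<Rightarrow> ('a \<Rightarrow> 'a \<Rightarrow> bool) \<Rightarrow> bool" where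
  "simple_graph V E \<longleftrightarrow> finite V \<and> (\<forall>u v. E u v \<longrightarrow> u \<in> V \<and> v \<in> V)
     \<and> (\<forall>u v. E u v \<longrightarrow> E v u) \<and> (\<forall>v. \<not> E v v)"

definition nbhd :: "'a set \<Rightarrow> ('a \<Rightarrow> 'a \<Rightarrow> bool) \<Rightarrow> 'a \<Rightarrow> 'a set" where
  "nbhd V E v = {u \<in> V. E v u}"

definition degree :: "'a set \<Rightarrow> ('a \<Rightarrow> 'a \<Rightarrow> bool) \<Rightarrow> 'a \<Rightarrow> nat" where
  "degree V E v = card (nbhd V E v)"

definition min_degree :: "'a set \<Rightarrow> ('a \<Rightarrow> 'a \<Rightarrow> bool) \<Rightarrow> nat" where
  "min_degree V E = Min (degree V E ` V)"

definition walk :: "'a set \<Rightarrow> ('a \<Rightarrow> 'a \<Rightarrow> bool) \<Rightarrow> 'a list \<Rightarrow> bool" where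
  "walk V E xs \<longleftrightarrow> xs \<noteq> [] \<and> set xs \<subseteq> V \<and> successively E xs"

definition connected_graph :: "'a set \<Rightarrow> ('a \<Rightarrow> 'a \<Rightarrow> bool) \<Rightarrow> bool" where
  "connected_graph V E \<longleftrightarrow> V \<noteq> {} \<and>
     (\<forall>u\<in>V. \<forall>v\<in>V. \<exists>xs. walk V E xs \<and> hd xs = u \<and> last xs = v)"

definition gdist :: "'a set \<Rightarrow> ('a \<Rightarrow> 'a \<Rightarrow> bool) \<Rightarrow> 'a \<Rightarrow> 'a \<Rightarrow> nat" where
  "gdist V E u v = (LEAST n. \<exists>xs. walk V E xs \<and> hd xs = u \<and> last xs = v \<and> length xs = Suc n)"

definition is_cycle :: "'a set \<Rightarrow> ('a \<Rightarrow> 'a \<Rightarrow> bool) \<Rightarrow> 'a list \<Rightarrow> bool" where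
  "is_cycle V E xs \<longleftrightarrow> length xs \<ge> 3 \<and> distinct xs \<and> walk V E xs \<and> E (last xs) (hd xs)"

text \<open>girth(G) \<ge> g (acyclic graphs have infinite girth).\<close>
definition girth_at_least :: "'a set \<Rightarrow> ('a \<Rightarrow> 'a \<Rightarrow> bool) \<Rightarrow> nat \<Rightarrow> bool" where
  "girth_at_least V E g \<longleftrightarrow> (\<forall>xs. is_cycle V E xs \<longrightarrow> length xs \<ge> g)"

definition open_packing :: "'a set \<Rightarrow> ('a \<Rightarrow> 'a \<Rightarrow> bool) \<Rightarrow> 'a set \<Rightarrow> bool" where
  "open_packing V E P \<longleftrightarrow> P \<subseteq> V \<and>
     (\<forall>u\<in>P. \<forall>v\<in>P. u \<noteq> v \<longrightarrow> \<not> (\<exists>w\<in>V. E u w \<and> E v w))"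

definition maximal_open_packing :: "'a set \<Rightarrow> ('a \<Rightarrow> 'a \<Rightarrow> bool) \<Rightarrow> 'a set \<Rightarrow> bool" where
  "maximal_open_packing V E P \<longleftrightarrow> open_packing V E P \<and>
     (\<forall>Q. open_packing V E Q \<and> P \<subseteq> Q \<longrightarrow> Q = P)"

definition rho_o :: "'a set \<Rightarrow> ('a \<Rightarrow> 'a \<Rightarrow> bool) \<Rightarrow> nat" where
  "rho_o V E = Max (card ` {P. open_packing V E P})"

definition rho_oL :: "'a set \<Rightarrow> ('a \<Rightarrow> 'a \<Rightarrow> bool) \<Rightarrow> nat" where
  "rho_oL V E = Min (card ` {P. maximal_open_packing V E P})"

definition in_U :: "'a set \<Rightarrow> ('a \<Rightarrow> 'a \<Rightarrow> bool) \<Rightarrow> bool" where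
  "in_U V E \<longleftrightarrow> rho_oL V E = rho_o V E"

definition leaf :: "'a set \<Rightarrow> ('a \<Rightarrow> 'a \<Rightarrow> bool) \<Rightarrow> 'a \<Rightarrow> bool" where
  "leaf V E v \<longleftrightarrow> v \<in> V \<and> degree V E v = 1"

definition support_vertex :: "'a set \<Rightarrow> ('a \<Rightarrow> 'a \<Rightarrow> bool) \<Rightarrow> 'a \<Rightarrow> bool" where
  "support_vertex V E s \<longleftrightarrow> s \<in> V \<and> (\<exists>u\<in>V. E s u \<and> leaf V E u)"

definition single_star_support :: "'a set \<Rightarrow> ('a \<Rightarrow> 'a \<Rightarrow> bool) \<Rightarrow> 'a \<Rightarrow> bool" where
  "single_star_support V E s \<longleftrightarrow> support_vertex V E s \<and>
     \<not> (\<exists>t\<in>V. E s t \<and> support_vertex V E t)"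

definition double_star_support :: "'a set \<Rightarrow> ('a \<Rightarrow> 'a \<Rightarrow> bool) \<Rightarrow> 'a \<Rightarrow> bool" where
  "double_star_support V E s \<longleftrightarrow> support_vertex V E s \<and>
     (\<exists>t\<in>V. E s t \<and> support_vertex V E t)"

end

theory Submission
  imports Defs
begin

text \<open>
  Let s1 a b s be a shortest path, l1 a leaf at s1, t a support neighbour of s and lt a leaf at t.
  Since the minimum and maximum sizes of maximal open packings agree, no vertex sees two support
  vertices (a maximal open packing through it could trade it for two leaves). Hence
  l1 s1 a b s t lt is a non-backtracking walk, and every vertex q two steps away from s1, s or t
  off this spine lies two steps before some further vertex, its twig. Girth at least 15 makes the
  neighbourhood of the spine a tree: non-backtracking walks with fewer than 15 vertices are paths
  and are determined by their ends, so two vertices whose tree distance is not 2 have no common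
  neighbour. Therefore a, b, lt and all twigs form an open packing; extend it to a maximal one P.
  No vertex of P other than a, b, lt shares a neighbour with l1, s1, s or t, so replacing a, b, lt
  by these four vertices gives a larger open packing, a contradiction.
\<close>

section \<open>Non-backtracking walks in graphs of large girth\<close>

fun non_backtracking :: "'a list \<Rightarrow> bool" where
  "non_backtracking (x # y # z # zs) \<longleftrightarrow> x \<noteq> z \<and> non_backtracking (y # z # zs)"
| "non_backtracking _ \<longleftrightarrow> True"

lemma non_backtracking_iff_nth:
  "non_backtracking xs \<longleftrightarrow> (\<forall>i. Suc (Suc i) < length xs \<longrightarrow> xs ! i \<noteq> xs ! Suc (Suc i))"
proof (induction xs rule: non_backtracking.induct)
  case (1 x y z zs)
  show ?case
    unfolding non_backtracking.simps(1) 1 by (auto simp: All_less_Suc2 nth_Cons' split: nat.splits)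
qed auto

lemma non_backtracking_rev [simp]: "non_backtracking (rev xs) \<longleftrightarrow> non_backtracking xs"
proof -
  have "non_backtracking (rev xs)" if "non_backtracking xs" for xs :: "'a list"
    unfolding non_backtracking_iff_nth
  proof (intro allI impI)
    fix i assume i: "Suc (Suc i) < length (rev xs)"
    have "Suc (Suc (length xs - Suc (Suc (Suc i)))) = length xs - Suc i"
      using i by simp
    then have "xs ! (length xs - Suc (Suc (Suc i))) \<noteq> xs ! (length xs - Suc i)"
      using i that unfolding non_backtracking_iff_nth by (metis diff_less length_rev zero_less_Suc less_trans)
    then show "rev xs ! i \<noteq> rev xs ! Suc (Suc i)"
      using i by (simp add: rev_nth)
  qed
  then show ?thesis by (metis rev_rev_ident)
qed

lemma non_backtracking_Cons: "non_backtracking (x # xs) \<Longrightarrow> non_backtracking xs"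
  by (induction xs rule: non_backtracking.induct) auto

lemma non_backtracking_appendD: "non_backtracking (xs @ ys) \<Longrightarrow> non_backtracking xs"
  by (induction xs rule: non_backtracking.induct) auto

lemma non_backtracking_append_rightD: "non_backtracking (xs @ ys) \<Longrightarrow> non_backtracking ys"
  by (induction xs) (auto dest: non_backtracking_Cons)

lemma non_backtracking_join:
  assumes "non_backtracking (xs @ [y])" "non_backtracking (y # zs)"
    and "xs \<noteq> [] \<Longrightarrow> zs \<noteq> [] \<Longrightarrow> last xs \<noteq> hd zs"
  shows "non_backtracking (xs @ y # zs)"
  using assms
proof (induction xs rule: induct_list012)
  case (2 x)
  then show ?case by (cases zs) auto
next
  case (3 x x' xs)
  then show ?case by (cases xs) auto
qed auto

definition nb_walk :: "'a set \<Rightarrow> ('a \<Rightarrow> 'a \<Rightarrow> bool) \<Rightarrow> 'a list \<Rightarrow> bool" where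
  "nb_walk V E xs \<longleftrightarrow> walk V E xs \<and> non_backtracking xs"

lemma simple_graph_sym: "simple_graph V E \<Longrightarrow> E u v \<Longrightarrow> E v u"
  and simple_graph_irrefl: "simple_graph V E \<Longrightarrow> \<not> E v v"
  and simple_graph_edge_in: "simple_graph V E \<Longrightarrow> E u v \<Longrightarrow> u \<in> V \<and> v \<in> V"
  unfolding simple_graph_def by blast+

lemma nb_walk_rev:
  assumes "simple_graph V E" "nb_walk V E xs"
  shows "nb_walk V E (rev xs)"
  using assms unfolding nb_walk_def walk_def
  by (auto elim: successively_mono intro: simple_graph_sym)

lemma nb_walk_join:
  assumes "nb_walk V E (xs @ [y])" "nb_walk V E (y # zs)"
    and "xs \<noteq> [] \<Longrightarrow> zs \<noteq> [] \<Longrightarrow> last xs \<noteq> hd zs"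
  shows "nb_walk V E (xs @ y # zs)"
  using assms non_backtracking_join[of xs y zs]
  unfolding nb_walk_def walk_def by (auto simp: successively_append_iff)

lemma nb_walk_Cons: "nb_walk V E (x # xs) \<Longrightarrow> xs \<noteq> [] \<Longrightarrow> nb_walk V E xs"
  unfolding nb_walk_def walk_def by (auto dest: non_backtracking_Cons simp: successively_Cons)

lemma nb_walk_appendD:
  assumes "nb_walk V E (xs @ ys)"
  shows "xs \<noteq> [] \<Longrightarrow> nb_walk V E xs" and "ys \<noteq> [] \<Longrightarrow> nb_walk V E ys"
  using assms unfolding nb_walk_def walk_def
  by (auto dest: non_backtracking_appendD non_backtracking_append_rightD simp: successively_append_iff)

lemma nb_walk_segment:
  assumes "nb_walk V E xs" "i \<le> j" "j < length xs"
  shows "nb_walk V E (drop i (take (Suc j) xs))" "set (drop i (take (Suc j) xs)) \<subseteq> set xs"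
    "length (drop i (take (Suc j) xs)) = Suc (j - i)"
    "hd (drop i (take (Suc j) xs)) = xs ! i" "last (drop i (take (Suc j) xs)) = xs ! j"
proof -
  have "nb_walk V E (take (Suc j) xs)"
    using nb_walk_appendD(1)[of V E "take (Suc j) xs" "drop (Suc j) xs"] assms by force
  then show "nb_walk V E (drop i (take (Suc j) xs))"
    using nb_walk_appendD(2)[of V E "take i (take (Suc j) xs)" "drop i (take (Suc j) xs)"] assms
    by (simp only: append_take_drop_id) simp
  show "set (drop i (take (Suc j) xs)) \<subseteq> set xs"
    by (meson order_trans set_drop_subset set_take_subset)
  show "length (drop i (take (Suc j) xs)) = Suc (j - i)"
    "hd (drop i (take (Suc j) xs)) = xs ! i" "last (drop i (take (Suc j) xs)) = xs ! j"
    using assms(2,3) by (auto simp: hd_drop_conv_nth last_conv_nth)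
qed

lemma nb_walk_first_return_cycle:
  assumes graph: "simple_graph V E" and walk: "nb_walk V E (x # ys)"
    and "distinct ys" "x \<in> set ys"
  shows "\<exists>c. is_cycle V E c \<and> length c \<le> length ys"
proof -
  obtain i where i: "i < length ys" "ys ! i = x"
    using assms(4) by (auto simp: in_set_conv_nth)
  have steps: "successively E (x # ys)" "non_backtracking (x # ys)"
    using walk unfolding nb_walk_def walk_def by auto
  have "i \<noteq> 0"
  proof
    assume "i = 0"
    with i steps(1) have "E x x" by (cases ys) auto
    with simple_graph_irrefl[OF graph] show False by blast
  qed
  moreover have "i \<noteq> 1"
    using steps(2) i by (cases ys rule: remdups_adj.cases) auto
  ultimately have i2: "2 \<le> i" by simp
  define c where "c = x # take i ys"
  have "is_cycle V E c"
    unfolding is_cycle_def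
  proof (intro conjI)
    show "3 \<le> length c" using i i2 by (simp add: c_def)
    show "distinct c"
      using assms(3) i by (auto simp: c_def in_set_conv_nth nth_eq_iff_index_eq)
    have "c = take (Suc i) (x # ys)" by (simp add: c_def)
    then show "walk V E c"
      using walk nb_walk_appendD(1)[of V E c "drop (Suc i) (x # ys)"]
      unfolding nb_walk_def by (metis append_take_drop_id list.discI c_def)
    have "last c = ys ! (i - 1)" using i i2 by (auto simp: c_def last_conv_nth)
    moreover have "successively E ys" using steps(1) by (auto simp: successively_Cons)
    ultimately show "E (last c) (hd c)"
      using successively_nth[of E ys "i - 1"] i i2 by (simp add: c_def)
  qed
  moreover have "length c \<le> length ys" using i by (simp add: c_def)
  ultimately show ?thesis by blast
qed

lemma nb_walk_not_distinct_imp_cycle: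
  assumes "simple_graph V E" "nb_walk V E xs" "\<not> distinct xs"
  shows "\<exists>c. is_cycle V E c \<and> length c < length xs"
  using assms(2,3)
proof (induction xs)
  case (Cons x ys)
  show ?case
  proof (cases "distinct ys")
    case False
    then have "nb_walk V E ys" using Cons.prems(1) nb_walk_Cons by fastforce
    then show ?thesis using Cons.IH False by fastforce
  next
    case True
    then show ?thesis
      using nb_walk_first_return_cycle[OF assms(1) Cons.prems(1) True] Cons.prems(2) by fastforce
  qed
qed simp

lemma nb_walk_distinct:
  assumes "simple_graph V E" "girth_at_least V E g" "nb_walk V E xs" "length xs \<le> g"
  shows "distinct xs"
  using nb_walk_not_distinct_imp_cycle[OF assms(1,3)] assms(2,4)
  unfolding girth_at_least_def by fastforce

lemma short_closed_nb_walk: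
  assumes "simple_graph V E" "girth_at_least V E g" "nb_walk V E xs"
    and "hd xs = last xs" "length xs \<le> g"
  shows "tl xs = []"
proof -
  have "distinct xs" using nb_walk_distinct[OF assms(1-3,5)] .
  show ?thesis
  proof (rule ccontr)
    assume "tl xs \<noteq> []"
    then obtain x ys where "xs = x # ys" "ys \<noteq> []" by (cases xs) auto
    then show False using \<open>distinct xs\<close> assms(4) last_in_set[of ys] by simp
  qed
qed

lemma nb_walks_unique:
  assumes "simple_graph V E" "girth_at_least V E g"
  shows "nb_walk V E xs \<Longrightarrow> nb_walk V E ys \<Longrightarrow> hd xs = hd ys \<Longrightarrow> last xs = last ys
    \<Longrightarrow> length xs + length ys \<le> Suc g \<Longrightarrow> xs = ys"
proof (induction xs arbitrary: ys)
  case Nil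
  then show ?case by (simp add: nb_walk_def walk_def)
next
  case (Cons u xs)
  have ys: "ys \<noteq> []" using Cons.prems(2) by (simp add: nb_walk_def walk_def)
  show ?case
  proof (cases "xs = [] \<or> tl ys = []")
    case True
    have "tl ys = [] \<and> xs = []"
    proof (cases "xs = []")
      case True
      then have "hd ys = last ys" using Cons.prems(3,4) by simp
      then show ?thesis using True short_closed_nb_walk[OF assms Cons.prems(2)] Cons.prems(5) by simp
    next
      case False
      then obtain v where "ys = [v]" using \<open>xs = [] \<or> tl ys = []\<close> ys by (cases ys) auto
      then have "hd (u # xs) = last (u # xs)" using Cons.prems(3,4) by simp
      then have "tl (u # xs) = []"
        using short_closed_nb_walk[OF assms Cons.prems(1)] Cons.prems(5) \<open>ys = [v]\<close> by simp
      then show ?thesis using False by simp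
    qed
    then show ?thesis using Cons.prems(3) ys by (cases ys) auto
  next
    case False
    then obtain x xs' y ys' where xs: "xs = x # xs'" and ys: "ys = u # y # ys'"
      using ys Cons.prems(3) by (cases xs; cases ys; cases "tl ys") auto
    show ?thesis
    proof (cases "x = y")
      case True
      then show ?thesis using Cons.IH[of "y # ys'"] Cons.prems xs ys nb_walk_Cons by fastforce
    next
      case False
      \<comment> \<open>the walks leave u in different directions and glue to a short closed walk\<close>
      define W where "W = rev (y # ys') @ u # xs"
      have "nb_walk V E W" unfolding W_def
        by (rule nb_walk_join)
          (use Cons.prems(1) nb_walk_rev[OF assms(1) Cons.prems(2)] ys False xs in auto)
      moreover have "hd W = last W" using Cons.prems(4) ys xs by (simp add: W_def hd_rev)
      moreover have "length W \<le> g" using Cons.prems(5) ys by (simp add: W_def)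
      ultimately have "tl W = []" by (rule short_closed_nb_walk[OF assms])
      then show ?thesis by (cases "rev ys'") (simp_all add: W_def)
    qed
  qed
qed

lemma nb_walk_no_common_neighbour:
  assumes "simple_graph V E" "girth_at_least V E g" "nb_walk V E W"
    and "2 \<le> length W" "length W + 2 \<le> g" "length W \<noteq> 3"
    and "E (hd W) w" "E (last W) w"
  shows False
proof (cases "hd W = last W")
  case True
  then show False using short_closed_nb_walk[OF assms(1-3)] assms(4,5) by (cases W) auto
next
  case False
  have "nb_walk V E [hd W, w, last W]"
    using False assms(1,7,8) unfolding nb_walk_def walk_def
    by (auto dest: simple_graph_edge_in intro: simple_graph_sym)
  then have "W = [hd W, w, last W]"
    by (rule nb_walks_unique[OF assms(1,2,3)]) (use assms(4,5) in auto)
  then show False using assms(6) by (metis length_Cons list.size(3) numeral_3_eq_3)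
qed

definition pendant_walk :: "'a set \<Rightarrow> ('a \<Rightarrow> 'a \<Rightarrow> bool) \<Rightarrow> 'a list \<Rightarrow> nat \<Rightarrow> 'a list \<Rightarrow> bool" where
  "pendant_walk V E \<sigma> k ys \<longleftrightarrow> nb_walk V E (ys @ [\<sigma> ! k]) \<and> (ys \<noteq> [] \<longrightarrow> last ys \<notin> set \<sigma>)"

lemma pendant_walks_connect:
  assumes graph: "simple_graph V E" and spine: "nb_walk V E \<sigma>"
    and ij: "i \<le> j" "j < length \<sigma>"
    and ys: "pendant_walk V E \<sigma> i ys" and zs: "pendant_walk V E \<sigma> j zs"
    and lasts: "i = j \<Longrightarrow> ys \<noteq> [] \<Longrightarrow> zs \<noteq> [] \<Longrightarrow> last ys \<noteq> last zs"
  obtains W where "nb_walk V E W" "length W = Suc (length ys + length zs + (j - i))"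
    "hd W = hd (ys @ [\<sigma> ! i])" "last W = hd (zs @ [\<sigma> ! j])"
proof -
  define seg where "seg = drop i (take (Suc j) \<sigma>)"
  note seg = nb_walk_segment[OF spine ij, folded seg_def]
  then have seg_Cons: "\<sigma> ! i # tl seg = seg" by (metis list.collapse list.size(3) nat.distinct(1))
  have "nb_walk V E (butlast seg @ \<sigma> ! j # rev zs)"
  proof (rule nb_walk_join)
    show "nb_walk V E (butlast seg @ [\<sigma> ! j])"
      using seg by (metis append_butlast_last_id list.size(3) nat.distinct(1))
    show "nb_walk V E (\<sigma> ! j # rev zs)"
      using nb_walk_rev[OF graph] zs unfolding pendant_walk_def by fastforce
    show "last (butlast seg) \<noteq> hd (rev zs)" if "butlast seg \<noteq> []" "rev zs \<noteq> []"
      using that zs seg(2) in_set_butlastD[OF last_in_set[OF that(1)]]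
      by (auto simp: pendant_walk_def hd_rev)
  qed
  then have tail: "nb_walk V E (\<sigma> ! i # tl seg @ rev zs)"
    using seg seg_Cons
    by (metis append_butlast_last_id append_Cons append_assoc append_Nil list.size(3) nat.distinct(1))
  define W where "W = ys @ \<sigma> ! i # tl seg @ rev zs"
  have "nb_walk V E W"
    unfolding W_def
  proof (rule nb_walk_join)
    show "nb_walk V E (ys @ [\<sigma> ! i])" using ys by (simp add: pendant_walk_def)
    show "nb_walk V E (\<sigma> ! i # tl seg @ rev zs)" by (fact tail)
    show "last ys \<noteq> hd (tl seg @ rev zs)" if "ys \<noteq> []" "tl seg @ rev zs \<noteq> []"
    proof (cases "tl seg = []")
      case True
      then have "i = j" using seg(3) ij(1) by (cases seg) auto
      then show ?thesis using True that lasts by (auto simp: hd_rev)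
    next
      case False
      then have "hd (tl seg) \<in> set \<sigma>" using seg(2) by (metis hd_in_set list.set_sel(2) subsetD tl_Nil)
      then show ?thesis using False that ys by (auto simp: pendant_walk_def)
    qed
  qed
  moreover have "length W = Suc (length ys + length zs + (j - i))"
    using seg(3) by (simp add: W_def)
  moreover have "hd W = hd (ys @ [\<sigma> ! i])" by (cases ys) (simp_all add: W_def)
  moreover have "last W = last (seg @ rev zs)"
    unfolding W_def by (metis append_Cons last_appendR list.distinct(1) seg_Cons)
  then have "last W = hd (zs @ [\<sigma> ! j])"
    using seg(5) by (cases zs) (simp_all add: last_rev)
  ultimately show thesis by (rule that)
qed

lemma pendant_walks_no_common_neighbour:
  assumes graph: "simple_graph V E" and girth: "girth_at_least V E g" and spine: "nb_walk V E \<sigma>"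
    and ij: "i \<le> j" "j < length \<sigma>"
    and ys: "pendant_walk V E \<sigma> i ys" and zs: "pendant_walk V E \<sigma> j zs"
    and lasts: "i = j \<Longrightarrow> ys \<noteq> [] \<Longrightarrow> zs \<noteq> [] \<Longrightarrow> last ys \<noteq> last zs"
    and d: "length ys + length zs + (j - i) \<notin> {0, 2}" "length ys + length zs + (j - i) + 3 \<le> g"
    and w: "E (hd (ys @ [\<sigma> ! i])) w" "E (hd (zs @ [\<sigma> ! j])) w"
  shows False
proof -
  obtain W where walk: "nb_walk V E W" and length: "length W = Suc (length ys + length zs + (j - i))"
    and ends: "hd W = hd (ys @ [\<sigma> ! i])" "last W = hd (zs @ [\<sigma> ! j])"
    using pendant_walks_connect[OF graph spine ij ys zs lasts] .
  show False
    by (rule nb_walk_no_common_neighbour[OF graph girth walk])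
      (use d w in \<open>simp_all only: length ends\<close>, auto simp flip: length_greater_0_conv)
qed

section \<open>Leaves, support vertices and open packings\<close>

lemma leaf_neighbour_unique:
  assumes "simple_graph V E" "leaf V E v" "E v x" "E v y"
  shows "x = y"
proof -
  have "x \<in> nbhd V E v" "y \<in> nbhd V E v"
    using assms(3,4) simple_graph_edge_in[OF assms(1)] unfolding nbhd_def by blast+
  moreover obtain z where "nbhd V E v = {z}"
    using assms(2) card_1_singletonE unfolding leaf_def degree_def by blast
  ultimately show ?thesis by simp
qed

lemma non_leaf_other_neighbour:
  assumes "simple_graph V E" "E v r" "\<not> leaf V E v"
  shows "\<exists>e. E v e \<and> e \<noteq> r"
proof (rule ccontr)
  assume "\<not> (\<exists>e. E v e \<and> e \<noteq> r)"
  then have "nbhd V E v = {r}"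
    using assms(2) simple_graph_edge_in[OF assms(1,2)] unfolding nbhd_def by blast
  then show False
    using assms simple_graph_edge_in[OF assms(1,2)] by (simp add: leaf_def degree_def)
qed

lemma open_packingI:
  assumes "P \<subseteq> V" "\<And>x y w. x \<in> P \<Longrightarrow> y \<in> P \<Longrightarrow> E x w \<Longrightarrow> E y w \<Longrightarrow> x = y"
  shows "open_packing V E P"
  using assms unfolding open_packing_def by blast

lemma open_packingD:
  assumes "simple_graph V E" "open_packing V E P" "x \<in> P" "y \<in> P" "E x w" "E y w"
  shows "x = y"
  using assms simple_graph_edge_in[OF assms(1,5)] unfolding open_packing_def by blast

lemma finite_open_packings: "simple_graph V E \<Longrightarrow> finite {P. open_packing V E P}"
  unfolding simple_graph_def open_packing_def by (rule finite_subset[of _ "Pow V"]) auto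

lemma finite_open_packing: "simple_graph V E \<Longrightarrow> open_packing V E P \<Longrightarrow> finite P"
  unfolding simple_graph_def open_packing_def by (auto intro: finite_subset)

lemma open_packing_extends_to_maximal:
  assumes "simple_graph V E" "open_packing V E S"
  obtains P where "maximal_open_packing V E P" "S \<subseteq> P"
proof -
  let ?F = "{P. open_packing V E P \<and> S \<subseteq> P}"
  have "finite ?F" using finite_open_packings[OF assms(1)] by (rule finite_subset[rotated]) auto
  moreover have "S \<in> ?F" using assms(2) by simp
  ultimately obtain P where P: "P \<in> ?F" and max: "\<forall>Q\<in>?F. P \<subseteq> Q \<longrightarrow> P = Q"
    using finite_has_maximal2[of ?F S] by auto
  have "maximal_open_packing V E P"
    unfolding maximal_open_packing_def
  proof (intro conjI allI impI)
    show "open_packing V E P" using P by simp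
    show "Q = P" if "open_packing V E Q \<and> P \<subseteq> Q" for Q
      using that P max by blast
  qed
  with P show thesis by (intro that) auto
qed

lemma in_U_card_le:
  assumes "simple_graph V E" "in_U V E" "maximal_open_packing V E P" "open_packing V E Q"
  shows "card Q \<le> card P"
proof -
  have "finite {P. maximal_open_packing V E P}"
    using finite_open_packings[OF assms(1)] unfolding maximal_open_packing_def
    by (auto intro: finite_subset)
  then have "rho_oL V E \<le> card P" unfolding rho_oL_def using assms(3) by (auto intro: Min_le)
  moreover have "card Q \<le> rho_o V E"
    unfolding rho_o_def using finite_open_packings[OF assms(1)] assms(4) by (auto intro: Max_ge)
  ultimately show ?thesis using assms(2) unfolding in_U_def by simp
qed

lemma leaves_exchange_open_packing:
  assumes graph: "simple_graph V E" and packing: "open_packing V E P" and "u \<in> P"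
    and u: "E u w1" "E u w2" "w1 \<noteq> w2"
    and l: "E w1 l1" "leaf V E l1" "E w2 l2" "leaf V E l2"
  shows "open_packing V E (insert l1 (insert l2 (P - {u})))" (is "open_packing V E ?Q")
proof (rule open_packingI)
  have only1: "y = w1" if "E l1 y" for y
    using leaf_neighbour_unique[OF graph l(2) that simple_graph_sym[OF graph l(1)]] .
  have only2: "y = w2" if "E l2 y" for y
    using leaf_neighbour_unique[OF graph l(4) that simple_graph_sym[OF graph l(3)]] .
  have at_w1: "z = l1" if "z \<in> ?Q" "E z w1" for z
    using that open_packingD[OF graph packing _ \<open>u \<in> P\<close> _ u(1)] only2 u(3) by auto
  have at_w2: "z = l2" if "z \<in> ?Q" "E z w2" for z
    using that open_packingD[OF graph packing _ \<open>u \<in> P\<close> _ u(2)] only1 u(3) by auto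
  show "?Q \<subseteq> V"
    using packing l(2,4) unfolding open_packing_def leaf_def by auto
  show "x = y" if xy: "x \<in> ?Q" "y \<in> ?Q" "E x w" "E y w" for x y w
  proof -
    consider "x = l1 \<or> y = l1" | "x = l2 \<or> y = l2" | "x \<in> P" "y \<in> P"
      using xy(1,2) by blast
    then show ?thesis
    proof cases
      case 1
      then have "w = w1" using only1 xy(3,4) by blast
      then show ?thesis using at_w1 xy by blast
    next
      case 2
      then have "w = w2" using only2 xy(3,4) by blast
      then show ?thesis using at_w2 xy by blast
    next
      case 3
      then show ?thesis using open_packingD[OF graph packing _ _ xy(3,4)] by blast
    qed
  qed
qed

lemma adjacent_supports_eq:
  assumes graph: "simple_graph V E" and U: "in_U V E"
    and u: "E u w1" "E u w2" and w: "support_vertex V E w1" "support_vertex V E w2"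
  shows "w1 = w2"
proof (rule ccontr)
  assume ne: "w1 \<noteq> w2"
  obtain l1 l2 where l: "E w1 l1" "leaf V E l1" "E w2 l2" "leaf V E l2"
    using w unfolding support_vertex_def by blast
  have "open_packing V E {u}"
    using simple_graph_edge_in[OF graph u(1)] by (auto intro: open_packingI)
  then obtain P where P: "maximal_open_packing V E P" "u \<in> P"
    using open_packing_extends_to_maximal[OF graph] by blast
  have packing: "open_packing V E P" using P(1) by (simp add: maximal_open_packing_def)
  have "l1 \<notin> P"
    using open_packingD[OF graph packing _ P(2) simple_graph_sym[OF graph l(1)] u(1)]
      leaf_neighbour_unique[OF graph l(2) simple_graph_sym[OF graph l(1)]] u(2) ne by blast
  moreover have "l2 \<notin> P"
    using open_packingD[OF graph packing _ P(2) simple_graph_sym[OF graph l(3)] u(2)]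
      leaf_neighbour_unique[OF graph l(4) simple_graph_sym[OF graph l(3)]] u(1) ne by blast
  moreover have "l1 \<noteq> l2"
    using leaf_neighbour_unique[OF graph l(2) simple_graph_sym[OF graph l(1)]]
      simple_graph_sym[OF graph l(3)] ne by blast
  ultimately have "card (insert l1 (insert l2 (P - {u}))) = Suc (card P)"
    using P(2) finite_open_packing[OF graph packing]
    by simp (metis Suc_pred card_gt_0_iff empty_iff)
  then show False
    using in_U_card_le[OF graph U P(1) leaves_exchange_open_packing[OF graph packing P(2) u ne l]]
    by simp
qed

section \<open>Support vertices at distance three\<close>

locale star_supports_at_distance_three =
  fixes V :: "'a set" and E :: "'a \<Rightarrow> 'a \<Rightarrow> bool" and l1 s1 a b s t lt :: 'a
  assumes graph: "simple_graph V E"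
    and girth: "girth_at_least V E 15"
    and in_U: "in_U V E"
    and single_star: "single_star_support V E s1"
    and support_s: "support_vertex V E s"
    and leaf_l1: "leaf V E l1" and leaf_lt: "leaf V E lt"
    and path: "walk V E [l1, s1, a, b, s, t, lt]"
    and no_shortcut: "s1 \<noteq> b" "a \<noteq> s"
begin

(* Positions 1, 4, 5 of the spine hold the support vertices s1, s, t; positions 2, 3, 6 hold
   a, b, lt, which go into the packing. *)
definition spine :: "'a list" where
  "spine = [l1, s1, a, b, s, t, lt]"

lemma spine_edges: "E l1 s1" "E s1 a" "E a b" "E b s" "E s t" "E t lt"
  and spine_in_V: "set spine \<subseteq> V"
  using path by (simp_all add: walk_def spine_def)

lemma length_spine: "length spine = 7"
  by (simp add: spine_def)

lemmas spine_edges_sym = spine_edges[THEN simple_graph_sym[OF graph]]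

lemma leaf_l1_neighbour: "E l1 w \<Longrightarrow> w = s1"
  and leaf_lt_neighbour: "E lt w \<Longrightarrow> w = t"
  using leaf_neighbour_unique[OF graph leaf_l1 _ spine_edges(1)]
    leaf_neighbour_unique[OF graph leaf_lt _ spine_edges_sym(6)] by blast+

lemma support_s1: "support_vertex V E s1"
  using single_star by (simp add: single_star_support_def)

lemma support_t: "support_vertex V E t"
  using spine_in_V spine_edges(6) leaf_lt by (auto simp: support_vertex_def spine_def)

lemma spine_nb_walk: "nb_walk V E spine"
proof -
  have "l1 \<noteq> a" using leaf_l1_neighbour spine_edges(3) no_shortcut(1) by blast
  moreover have "b \<noteq> t"
    using adjacent_supports_eq[OF graph in_U spine_edges_sym(2) spine_edges(3) support_s1]
      support_t no_shortcut(1) by blast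
  moreover have "s \<noteq> lt" using leaf_lt_neighbour spine_edges_sym(4) \<open>b \<noteq> t\<close> by blast
  ultimately show ?thesis
    using path no_shortcut by (simp add: nb_walk_def spine_def)
qed

lemma distinct_spine: "distinct spine"
  by (rule nb_walk_distinct[OF graph girth spine_nb_walk]) (simp add: spine_def)

lemmas spine_vertices_distinct = distinct_spine[unfolded spine_def, simplified]

lemma pendant_walk_Nil: "k < length spine \<Longrightarrow> pendant_walk V E spine k []"
  using spine_in_V by (auto simp: pendant_walk_def nb_walk_def walk_def)

lemma spine_support: "k \<in> {1, 4, 5} \<Longrightarrow> support_vertex V E (spine ! k)"
  using support_s1 support_s support_t by (auto simp: spine_def)

lemma off_spine_neighbour_not_support:
  assumes "k \<in> {1, 4, 5}" "E (spine ! k) r" "r \<notin> set spine"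
  shows "\<not> support_vertex V E r"
proof
  assume r: "support_vertex V E r"
  from assms(1) consider "spine ! k = s1" | "spine ! k = s" | "spine ! k = t"
    by (auto simp: spine_def)
  then show False
  proof cases
    case 1
    then show False
      using single_star r assms(2) simple_graph_edge_in[OF graph assms(2)]
      by (auto simp: single_star_support_def)
  next
    case 2
    then have "t = r"
      using adjacent_supports_eq[OF graph in_U spine_edges(5) _ support_t r] assms(2) by simp
    moreover have "t \<in> set spine" by (simp add: spine_def)
    ultimately show False using assms(3) by simp
  next
    case 3
    then have "s = r"
      using adjacent_supports_eq[OF graph in_U spine_edges_sym(5) _ support_s r] assms(2) by simp
    moreover have "s \<in> set spine" by (simp add: spine_def)
    ultimately show False using assms(3) by simp
  qed
qed

lemma branch_extends:
  assumes k: "k \<in> {1, 4, 5}" and qr: "pendant_walk V E spine k [q, r]"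
  obtains f e where "pendant_walk V E spine k [f, e, q, r]"
proof -
  have qr_walk: "E q r" "E r (spine ! k)" "q \<noteq> spine ! k" "r \<notin> set spine" "q \<in> V" "r \<in> V"
    using qr by (auto simp: pendant_walk_def nb_walk_def walk_def)
  have r_not_support: "\<not> support_vertex V E r"
    using off_spine_neighbour_not_support[OF k simple_graph_sym[OF graph qr_walk(2)] qr_walk(4)] .
  have "\<not> leaf V E q"
    using r_not_support qr_walk by (auto simp: support_vertex_def dest: simple_graph_sym[OF graph])
  then obtain e where e: "E q e" "e \<noteq> r"
    using non_leaf_other_neighbour[OF graph qr_walk(1)] by blast
  have "\<not> support_vertex V E q"
    using adjacent_supports_eq[OF graph in_U simple_graph_sym[OF graph qr_walk(1)] qr_walk(2) _
        spine_support[OF k]] qr_walk(3) by blast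
  then have "\<not> leaf V E e"
    using e(1) qr_walk(5) simple_graph_edge_in[OF graph e(1)] by (auto simp: support_vertex_def)
  then obtain f where f: "E e f" "f \<noteq> q"
    using non_leaf_other_neighbour[OF graph simple_graph_sym[OF graph e(1)]] by blast
  have "spine ! k \<in> V" using k spine_in_V by (auto simp: spine_def)
  then have "pendant_walk V E spine k [f, e, q, r]"
    using qr_walk e f simple_graph_edge_in[OF graph f(1)] simple_graph_sym[OF graph]
    by (auto simp: pendant_walk_def nb_walk_def walk_def)
  then show thesis by (rule that)
qed

definition branches :: "'a set" where
  "branches = {q. \<exists>k\<in>{1, 4, 5}. \<exists>r. pendant_walk V E spine k [q, r]}"

(* Meaningful only on branches, where branch_extends provides a witness. A twig in an open
   packing keeps its branch vertex out of it. *)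
definition twig :: "'a \<Rightarrow> 'a" where
  "twig q = (SOME f. \<exists>k\<in>{1, 4, 5}. \<exists>e r. pendant_walk V E spine k [f, e, q, r])"

lemma twig_pendant_walk:
  assumes "q \<in> branches"
  shows "\<exists>k\<in>{1, 4, 5}. \<exists>e r. pendant_walk V E spine k [twig q, e, q, r]"
proof -
  obtain k r where "k \<in> {1, 4, 5}" "pendant_walk V E spine k [q, r]"
    using assms by (auto simp: branches_def)
  then have "\<exists>f. \<exists>k\<in>{1, 4, 5}. \<exists>e r. pendant_walk V E spine k [f, e, q, r]"
    by (metis branch_extends)
  then show ?thesis unfolding twig_def by (rule someI_ex)
qed

definition seed :: "'a set" where
  "seed = twig ` branches \<union> {a, b, lt}"

definition attached_at :: "'a \<Rightarrow> nat \<Rightarrow> 'a list \<Rightarrow> bool" where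
  "attached_at x k ys \<longleftrightarrow> k < length spine \<and> pendant_walk V E spine k ys \<and> hd (ys @ [spine ! k]) = x \<and>
     (k \<in> {1, 4, 5} \<and> length ys = 4 \<and> x = twig (ys ! 2) \<or> k \<in> {2, 3, 6} \<and> ys = [])"

lemma seed_attached:
  assumes "x \<in> seed"
  obtains k ys where "attached_at x k ys"
proof (cases "x \<in> twig ` branches")
  case True
  then obtain q where "q \<in> branches" "x = twig q" by blast
  with twig_pendant_walk obtain k e r where "k \<in> {1, 4, 5}" "pendant_walk V E spine k [x, e, q, r]"
    by blast
  then have "attached_at x k [x, e, q, r]"
    using \<open>x = twig q\<close> by (auto simp: attached_at_def spine_def)
  then show thesis by (rule that)
next
  case False
  then have "x \<in> {spine ! 2, spine ! 3, spine ! 6}"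
    using assms by (simp add: seed_def spine_def)
  then obtain k where k: "k \<in> {2, 3, 6}" "x = spine ! k" by blast
  then have "k < length spine" by (auto simp: spine_def)
  then have "attached_at x k []"
    using k pendant_walk_Nil by (simp add: attached_at_def)
  then show thesis by (rule that)
qed

lemma attached_no_common_neighbour:
  assumes x: "attached_at x k ys" and y: "attached_at y k' zs"
    and "k \<le> k'" "x \<noteq> y" "E x w" "E y w"
  shows False
proof (cases "k = k'")
  case False
  have d: "length ys + length zs + (k' - k) \<notin> {0, 2}" "length ys + length zs + (k' - k) + 3 \<le> 15"
    using x y assms(3) False unfolding attached_at_def by auto
  show False
    by (rule pendant_walks_no_common_neighbour[OF graph girth spine_nb_walk assms(3) _ _ _ _ d])
      (use x y False assms(5,6) in \<open>auto simp: attached_at_def\<close>)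
next
  case True
  have long: "k \<in> {1, 4, 5}" "length ys = 4" "length zs = 4"
    using x y assms(4) True unfolding attached_at_def by auto
  obtain e q r where ys: "ys = [x, e, q, r]" "x = twig q"
    using x long(2) unfolding attached_at_def by (auto simp: length_Suc_conv numeral_eq_Suc)
  obtain e' q' r' where zs: "zs = [y, e', q', r']" "y = twig q'"
    using y long(3) unfolding attached_at_def by (auto simp: length_Suc_conv numeral_eq_Suc)
  show False
  proof (cases "r = r'")
    case False
    show False
      by (rule pendant_walks_no_common_neighbour[OF graph girth spine_nb_walk, of k k ys zs])
        (use x y True False ys zs assms(5,6) in \<open>auto simp: attached_at_def\<close>)
  next
    case True
    \<comment> \<open>both twigs hang off the same vertex r, which serves as a one-vertex spine\<close>
    have walks: "nb_walk V E [x, e, q, r]" "nb_walk V E [y, e', q', r]"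
      using x y ys zs True nb_walk_appendD(1)[of V E "_ # _"]
      unfolding attached_at_def pendant_walk_def by auto
    then have "pendant_walk V E [r] 0 [x, e, q]" "pendant_walk V E [r] 0 [y, e', q']"
      by (auto simp: pendant_walk_def nb_walk_def walk_def simple_graph_irrefl[OF graph])
    moreover have "nb_walk V E [r]" using walks by (simp add: nb_walk_def walk_def)
    moreover have "q \<noteq> q'" using ys zs assms(4) by blast
    ultimately show False
      using pendant_walks_no_common_neighbour[OF graph girth, of "[r]" 0 0 "[x, e, q]" "[y, e', q']"]
        assms(5,6) by simp
  qed
qed

lemma seed_open_packing: "open_packing V E seed"
proof (rule open_packingI)
  have "twig q \<in> V" if "q \<in> branches" for q
    using twig_pendant_walk[OF that] by (auto simp: pendant_walk_def nb_walk_def walk_def)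
  then show "seed \<subseteq> V" using spine_in_V by (auto simp: seed_def spine_def)
  show "x = y" if xy: "x \<in> seed" "y \<in> seed" "E x w" "E y w" for x y w
  proof (rule ccontr)
    assume "x \<noteq> y"
    obtain k ys k' zs where "attached_at x k ys" "attached_at y k' zs"
      using seed_attached xy(1,2) by metis
    then show False
      using attached_no_common_neighbour \<open>x \<noteq> y\<close> xy(3,4) nat_le_linear by metis
  qed
qed

lemma spine_no_common_neighbour:
  assumes "i < j" "j < length spine" "j - i \<noteq> 2" "E (spine ! i) w" "E (spine ! j) w"
  shows False
  using pendant_walks_no_common_neighbour[OF graph girth spine_nb_walk, of i j "[]" "[]" w] assms
    pendant_walk_Nil
  by (simp add: length_spine) linarith

lemma exchanged_vertices_no_common_neighbour:
  assumes "x \<in> {l1, s1, s, t}" "y \<in> {l1, s1, s, t}" "x \<noteq> y" "E x w" "E y w"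
  shows False
proof -
  have "\<not> (E l1 w \<and> E s1 w)" "\<not> (E l1 w \<and> E s w)" "\<not> (E l1 w \<and> E t w)"
    "\<not> (E s1 w \<and> E s w)" "\<not> (E s1 w \<and> E t w)" "\<not> (E s w \<and> E t w)"
    using spine_no_common_neighbour[of 0 1 w] spine_no_common_neighbour[of 0 4 w]
      spine_no_common_neighbour[of 0 5 w] spine_no_common_neighbour[of 1 4 w]
      spine_no_common_neighbour[of 1 5 w] spine_no_common_neighbour[of 4 5 w]
    by (auto simp: spine_def)
  then show False using assms by auto
qed

lemma branch_not_in_packing:
  assumes "open_packing V E P" "seed \<subseteq> P" "q \<in> branches"
  shows "q \<notin> P"
proof
  assume "q \<in> P"
  obtain k e r where "pendant_walk V E spine k [twig q, e, q, r]"
    using twig_pendant_walk[OF assms(3)] by blast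
  then have "E (twig q) e" "E q e" "twig q \<noteq> q"
    by (auto simp: pendant_walk_def nb_walk_def walk_def intro: simple_graph_sym[OF graph])
  moreover have "twig q \<in> P" using assms(2,3) by (auto simp: seed_def)
  ultimately show False using open_packingD[OF graph assms(1)] \<open>q \<in> P\<close> by blast
qed

lemma exchanged_not_in_packing:
  assumes P: "open_packing V E P" and seed: "seed \<subseteq> P"
  shows "l1 \<notin> P" "s1 \<notin> P" "s \<notin> P" "t \<notin> P"
proof -
  have I1: "a \<in> P" "b \<in> P" "lt \<in> P" using seed by (auto simp: seed_def)
  show "l1 \<notin> P" "s1 \<notin> P" "s \<notin> P" "t \<notin> P"
    using open_packingD[OF graph P _ I1(1) spine_edges(1) spine_edges_sym(2)]
      open_packingD[OF graph P _ I1(2) spine_edges(2) spine_edges_sym(3)]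
      open_packingD[OF graph P _ I1(3) spine_edges(5) spine_edges_sym(6)]
      open_packingD[OF graph P _ I1(2) spine_edges_sym(5) spine_edges(4)]
      spine_vertices_distinct by auto
qed

(* A common neighbour on the spine is a leaf or adjacent to a, b or lt; one off the spine makes
   x a branch vertex, which its twig keeps out of P. *)
lemma kept_exchanged_no_common_neighbour:
  assumes P: "open_packing V E P" and seed: "seed \<subseteq> P"
    and x: "x \<in> P" "x \<notin> {a, b, lt}" and v: "v \<in> {l1, s1, s, t}" and w: "E x w" "E v w"
  shows False
proof (cases "w \<in> set spine")
  case True
  then consider "w = l1" | "w = lt" | u where "u \<in> {a, b, lt}" "E u w"
    using spine_edges spine_edges_sym by (auto simp: spine_def)
  then show False
  proof cases
    case 1
    then show False
      using leaf_l1_neighbour simple_graph_sym[OF graph w(1)] x(1) exchanged_not_in_packing[OF P seed]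
      by blast
  next
    case 2
    then show False
      using leaf_lt_neighbour simple_graph_sym[OF graph w(1)] x(1) exchanged_not_in_packing[OF P seed]
      by blast
  next
    case 3
    moreover have "a \<in> P" "b \<in> P" "lt \<in> P" using seed by (auto simp: seed_def)
    ultimately show False using open_packingD[OF graph P x(1) _ w(1)] x(2) by blast
  qed
next
  case False
  have "v \<in> {spine ! 1, spine ! 4, spine ! 5}"
    using v False leaf_l1_neighbour w(2) by (auto simp: spine_def)
  then obtain k where k: "k \<in> {1, 4, 5}" "v = spine ! k" by blast
  have "x \<noteq> v" using x(1) v exchanged_not_in_packing[OF P seed] by auto
  moreover have "x \<in> V" "w \<in> V" "v \<in> V"
    using simple_graph_edge_in[OF graph w(1)] simple_graph_edge_in[OF graph w(2)] by auto
  ultimately have "pendant_walk V E spine k [x, w]"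
    using k(2) w(1) False simple_graph_sym[OF graph w(2)]
    by (simp add: pendant_walk_def nb_walk_def walk_def)
  then have "x \<in> branches" using k(1) by (auto simp: branches_def)
  then show False using branch_not_in_packing[OF P seed] x(1) by blast
qed

lemma exchange_open_packing:
  assumes P: "open_packing V E P" and seed: "seed \<subseteq> P"
  shows "open_packing V E (P - {a, b, lt} \<union> {l1, s1, s, t})" (is "open_packing V E ?Q")
proof (rule open_packingI)
  show "?Q \<subseteq> V"
    using P spine_in_V unfolding open_packing_def spine_def by auto
  show "x = y" if xy: "x \<in> ?Q" "y \<in> ?Q" "E x w" "E y w" for x y w
  proof (rule ccontr)
    assume "x \<noteq> y"
    consider "x \<in> P - {a, b, lt}" "y \<in> P - {a, b, lt}" | "x \<in> P - {a, b, lt}" "y \<in> {l1, s1, s, t}"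
      | "x \<in> {l1, s1, s, t}" "y \<in> P - {a, b, lt}" | "x \<in> {l1, s1, s, t}" "y \<in> {l1, s1, s, t}"
      using xy(1,2) by blast
    then show False
    proof cases
      case 1
      then show False using open_packingD[OF graph P _ _ xy(3,4)] \<open>x \<noteq> y\<close> by blast
    next
      case 2
      then show False using kept_exchanged_no_common_neighbour[OF P seed] xy(3,4) by blast
    next
      case 3
      then show False using kept_exchanged_no_common_neighbour[OF P seed] xy(3,4) by blast
    next
      case 4
      then show False using exchanged_vertices_no_common_neighbour \<open>x \<noteq> y\<close> xy(3,4) by blast
    qed
  qed
qed

lemma exchange_card:
  assumes P: "open_packing V E P" and seed: "seed \<subseteq> P"
  shows "card (P - {a, b, lt} \<union> {l1, s1, s, t}) = card P + 1"
proof -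
  have removed: "{a, b, lt} \<subseteq> P" using seed by (auto simp: seed_def)
  have "finite P" using finite_open_packing[OF graph P] .
  moreover have "card {a, b, lt} = 3" "card {l1, s1, s, t} = 4"
    using spine_vertices_distinct by simp_all
  moreover have "3 \<le> card P"
    using card_mono[OF \<open>finite P\<close> removed] \<open>card {a, b, lt} = 3\<close> by simp
  moreover have "card (P - {a, b, lt} \<union> {l1, s1, s, t}) = card (P - {a, b, lt}) + card {l1, s1, s, t}"
    using \<open>finite P\<close> exchanged_not_in_packing[OF P seed] by (intro card_Un_disjoint) auto
  ultimately show ?thesis
    using removed by (simp add: card_Diff_subset)
qed

theorem impossible: False
proof -
  obtain P where P: "maximal_open_packing V E P" "seed \<subseteq> P"
    using open_packing_extends_to_maximal[OF graph seed_open_packing] by blast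
  have packing: "open_packing V E P" using P(1) by (simp add: maximal_open_packing_def)
  have "card (P - {a, b, lt} \<union> {l1, s1, s, t}) \<le> card P"
    using in_U_card_le[OF graph in_U P(1) exchange_open_packing[OF packing P(2)]] .
  then show False using exchange_card[OF packing P(2)] by simp
qed

end

lemma gdist_walk:
  assumes "connected_graph V E" "u \<in> V" "v \<in> V"
  obtains xs where "walk V E xs" "hd xs = u" "last xs = v" "length xs = Suc (gdist V E u v)"
proof -
  obtain ys where ys: "walk V E ys" "hd ys = u" "last ys = v"
    using assms unfolding connected_graph_def by blast
  then have "\<exists>xs. walk V E xs \<and> hd xs = u \<and> last xs = v \<and> length xs = Suc (length ys - 1)"
    by (intro exI[of _ ys]) (cases ys; simp add: walk_def)
  then have "\<exists>xs. walk V E xs \<and> hd xs = u \<and> last xs = v \<and> length xs = Suc (gdist V E u v)"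
    unfolding gdist_def by (rule LeastI)
  then show thesis using that by blast
qed

lemma gdist_le_walk:
  assumes "walk V E xs" "hd xs = u" "last xs = v"
  shows "gdist V E u v \<le> length xs - 1"
  unfolding gdist_def
  by (rule Least_le, rule exI[of _ xs]) (use assms in \<open>cases xs; simp add: walk_def\<close>)

lemma gdist_three_path:
  assumes "connected_graph V E" "u \<in> V" "v \<in> V" "gdist V E u v = 3"
  obtains a b where "walk V E [u, a, b, v]" "u \<noteq> b" "a \<noteq> v"
proof -
  obtain xs where xs: "walk V E xs" "hd xs = u" "last xs = v" "length xs = 4"
    using gdist_walk[OF assms(1-3)] assms(4) by auto
  then obtain x0 a b x3 where "xs = [x0, a, b, x3]"
    by (auto simp: length_Suc_conv eval_nat_numeral)
  then have path: "walk V E [u, a, b, v]" using xs by simp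
  have "\<not> walk V E [u, v]"
    using gdist_le_walk[of V E "[u, v]" u v] assms(4) by auto
  then have "u \<noteq> b" "a \<noteq> v"
    using path by (auto simp: walk_def)
  with path show thesis by (rule that)
qed

theorem claim2:
  fixes V :: "'a set" and E :: "'a \<Rightarrow> 'a \<Rightarrow> bool" and s1 :: 'a
  assumes "simple_graph V E"
    and "connected_graph V E"
    and "min_degree V E = 1"
    and "girth_at_least V E 15"
    and "in_U V E"
    and "single_star_support V E s1"
  shows "\<not> (\<exists>s\<in>V. double_star_support V E s \<and> gdist V E s1 s = 3)"
proof
  assume "\<exists>s\<in>V. double_star_support V E s \<and> gdist V E s1 s = 3"
  then obtain s t lt where s: "s \<in> V" "support_vertex V E s" "gdist V E s1 s = 3"
    and t: "E s t" "E t lt" "leaf V E lt"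
    by (auto simp: double_star_support_def support_vertex_def)
  obtain l1 where l1: "E s1 l1" "leaf V E l1"
    using assms(6) by (auto simp: single_star_support_def support_vertex_def)
  have "s1 \<in> V" using assms(6) by (simp add: single_star_support_def support_vertex_def)
  then obtain a b where path: "walk V E [s1, a, b, s]" "s1 \<noteq> b" "a \<noteq> s"
    using gdist_three_path[OF assms(2) _ s(1,3)] by blast
  have "walk V E [l1, s1, a, b, s, t, lt]"
    using path t l1 simple_graph_sym[OF assms(1)] simple_graph_edge_in[OF assms(1)]
    by (auto simp: walk_def)
  then interpret star_supports_at_distance_three V E l1 s1 a b s t lt
    using assms(1,4,5,6) s(2) t(3) l1(2) path(2,3) by unfold_locales
  show False by (rule impossible)
qed

end
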